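(* For every infinite cardinal $\lambda$, there is no Hausdorff $d$-feebly compact topological semigroup $S$ containing a dense subsemigroup isomorphic to the semigroup of $\lambda\times\lambda$-matrix units $B_\lambda$.
   Context: For a non-zero cardinal $\lambda$, $B_\lambda=(\lambda\times\lambda)\cup\{0\}$ with multiplication $(a,b)\cdot(c,d)=(a,d)$ if $b=c$, $(a,b)\cdot(c,d)=0$ if $b\neq c$, and $(a,b)\cdot0=0\cdot(a,b)=0\cdot0=0$. A topological semigroup is a topological space with a jointly continuous associative operation. A space is $d$-feebly compact if every discrete family of its open subsets is finite. *)

theory Defs
  imports "HOL-Analysis.Analysis"
begin

text \<open>The semigroup of L x L matrix units B_L: elements Some (a,b) for a,b in L, and None as zero.\<close>

definition B_carrier :: "'l set \<Rightarrow> ('l \<times> 'l) option set" where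
  "B_carrier L = insert None (Some ` (L \<times> L))"

fun B_mult :: "('l \<times> 'l) option \<Rightarrow> ('l \<times> 'l) option \<Rightarrow> ('l \<times> 'l) option" where
  "B_mult (Some (a, b)) (Some (c, d)) = (if b = c then Some (a, d) else None)"
| "B_mult _ _ = None"

definition topological_semigroup :: "'a topology \<Rightarrow> ('a \<Rightarrow> 'a \<Rightarrow> 'a) \<Rightarrow> bool" where
  "topological_semigroup X m \<longleftrightarrow>
     (\<forall>x\<in>topspace X. \<forall>y\<in>topspace X. m x y \<in> topspace X) \<and>
     (\<forall>x\<in>topspace X. \<forall>y\<in>topspace X. \<forall>z\<in>topspace X. m (m x y) z = m x (m y z)) \<and>
     continuous_map (prod_topology X X) X (\<lambda>(x, y). m x y)"

definition discrete_family :: "'a topology \<Rightarrow> 'a set set \<Rightarrow> bool" where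
  "discrete_family X \<U> \<longleftrightarrow>
     (\<forall>x\<in>topspace X. \<exists>V. openin X V \<and> x \<in> V \<and>
        (\<forall>U1\<in>\<U>. \<forall>U2\<in>\<U>. U1 \<inter> V \<noteq> {} \<and> U2 \<inter> V \<noteq> {} \<longrightarrow> U1 = U2))"

definition d_feebly_compact :: "'a topology \<Rightarrow> bool" where
  "d_feebly_compact X \<longleftrightarrow>
     (\<forall>\<U>. (\<forall>U\<in>\<U>. openin X U) \<and> discrete_family X \<U> \<longrightarrow> finite \<U>)"

end

theory Submission
  imports Defs
begin

text \<open>
  In \<open>S\<close> every matrix unit \<open>e\<^sub>a\<^sub>b\<close> is an isolated point: the continuous map
  \<open>t \<mapsto> e\<^sub>a\<^sub>a t e\<^sub>b\<^sub>b\<close> sends the dense copy of \<open>B\<^sub>\<lambda>\<close> minus \<open>e\<^sub>a\<^sub>b\<close> to \<open>0\<close>.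
  So by \<open>d\<close>-feeble compactness every infinite family of matrix units accumulates at
  some point of \<open>S\<close>. An accumulation point \<open>q\<close> of idempotents \<open>e\<^sub>a\<^sub>a\<close> satisfies
  \<open>q q = 0\<close>, because distinct ones are orthogonal; by continuity every neighbourhood of
  \<open>0\<close> then contains all but finitely many \<open>e\<^sub>a\<^sub>a\<close>. Since \<open>0\<close> absorbs all of \<open>S\<close>,
  this forces, for fixed \<open>c\<close> and any neighbourhoods \<open>U\<^sub>1, U\<^sub>2\<close> of \<open>0\<close>, some \<open>a\<close> with
  \<open>e\<^sub>c\<^sub>a \<in> U\<^sub>1\<close> and \<open>e\<^sub>a\<^sub>c \<in> U\<^sub>2\<close>. But \<open>e\<^sub>c\<^sub>a e\<^sub>a\<^sub>c = e\<^sub>c\<^sub>c\<close>, and \<open>U\<^sub>1 U\<^sub>2\<close> can be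
  chosen to avoid \<open>e\<^sub>c\<^sub>c\<close> because \<open>0 0 = 0 \<noteq> e\<^sub>c\<^sub>c\<close>.
\<close>

lemma t1_space_eq_if_in_all_nbhds:
  assumes "t1_space X" "x \<in> topspace X" "y \<in> topspace X"
    and "\<And>U. openin X U \<Longrightarrow> x \<in> U \<Longrightarrow> y \<in> U"
  shows "x = y"
  using assms unfolding t1_space_def by blast

lemma t1_space_open_eq_singleton_if_dense:
  assumes "t1_space X" "X closure_of D = topspace X"
    and "openin X U" "d \<in> U" "U \<inter> D \<subseteq> {d}"
  shows "U = {d}"
proof -
  have "openin X (U - {d})"
    using assms(1,3,4) by (meson closedin_t1_singleton openin_diff openin_subset subsetD)
  moreover have "D \<inter> (U - {d}) = {}"
    using assms(5) by blast
  ultimately have "U - {d} = {}"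
    using assms(2) unfolding dense_intersects_open by blast
  then show ?thesis
    using assms(4) by blast
qed

lemma d_feebly_compact_accumulation:
  assumes "t1_space X" "d_feebly_compact X"
    and "inj_on f A" "infinite A" "\<And>a. a \<in> A \<Longrightarrow> openin X {f a}"
  obtains q where "q \<in> topspace X"
    "\<And>V. openin X V \<Longrightarrow> q \<in> V \<Longrightarrow> infinite {a \<in> A. f a \<in> V}"
proof -
  define \<U> where "\<U> = (\<lambda>a. {f a}) ` A"
  have "inj_on (\<lambda>a. {f a}) A"
    using assms(3) by (auto simp: inj_on_def)
  then have "infinite \<U>"
    using assms(4) finite_image_iff unfolding \<U>_def by blast
  moreover have "\<forall>U\<in>\<U>. openin X U"
    using assms(5) unfolding \<U>_def by blast
  ultimately have "\<not> discrete_family X \<U>"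
    using assms(2) unfolding d_feebly_compact_def by blast
  then obtain q where q: "q \<in> topspace X"
    and "\<not> (\<exists>V. openin X V \<and> q \<in> V \<and>
              (\<forall>U1\<in>\<U>. \<forall>U2\<in>\<U>. U1 \<inter> V \<noteq> {} \<and> U2 \<inter> V \<noteq> {} \<longrightarrow> U1 = U2))"
    unfolding discrete_family_def by blast
  then have two: "\<exists>a\<in>A. \<exists>b\<in>A. f a \<in> V \<and> f b \<in> V \<and> f a \<noteq> f b"
    if "openin X V" "q \<in> V" for V
    using that unfolding \<U>_def by blast
  have "infinite {a \<in> A. f a \<in> V}" if V: "openin X V" "q \<in> V" for V
  proof
    \<comment> \<open>removing the finitely many points of the family in \<open>V\<close> other than \<open>q\<close> leaves a
        neighbourhood of \<open>q\<close> on which the family can only take the value \<open>q\<close>\<close>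
    define F where "F = f ` {a \<in> A. f a \<in> V} - {q}"
    assume "finite {a \<in> A. f a \<in> V}"
    then have "finite F"
      unfolding F_def by simp
    moreover have "F \<subseteq> topspace X"
      using openin_subset[OF assms(5)] unfolding F_def by blast
    ultimately have "closedin X F"
      using assms(1) t1_space_closedin_finite by blast
    then have "openin X (V - F)"
      using V(1) by blast
    moreover have "q \<in> V - F"
      using V(2) unfolding F_def by blast
    ultimately obtain a b where "a \<in> A" "b \<in> A" "f a \<in> V - F" "f b \<in> V - F" "f a \<noteq> f b"
      using two by blast
    then show False
      unfolding F_def by auto
  qed
  then show ?thesis
    using that q by blast
qed

lemma topological_semigroup_mult_in:
  "topological_semigroup X m \<Longrightarrow> x \<in> topspace X \<Longrightarrow> y \<in> topspace X \<Longrightarrow> m x y \<in> topspace X"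
  unfolding topological_semigroup_def by blast

lemma topological_semigroup_continuous_mult:
  "topological_semigroup X m \<Longrightarrow> continuous_map (prod_topology X X) X (\<lambda>(x, y). m x y)"
  unfolding topological_semigroup_def by blast

lemma topological_semigroup_continuous_left:
  assumes "topological_semigroup X m" "k \<in> topspace X"
  shows "continuous_map X X (m k)"
proof -
  have "continuous_map X (prod_topology X X) (\<lambda>t. (k, t))"
    using assms(2) by (intro continuous_map_pairedI) simp_all
  from continuous_map_compose[OF this topological_semigroup_continuous_mult[OF assms(1)]]
  show ?thesis
    by (simp add: o_def)
qed

lemma topological_semigroup_continuous_right:
  assumes "topological_semigroup X m" "k \<in> topspace X"
  shows "continuous_map X X (\<lambda>t. m t k)"
proof -
  have "continuous_map X (prod_topology X X) (\<lambda>t. (t, k))"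
    using assms(2) by (intro continuous_map_pairedI) simp_all
  from continuous_map_compose[OF this topological_semigroup_continuous_mult[OF assms(1)]]
  show ?thesis
    by (simp add: o_def)
qed

lemma topological_semigroup_mult_nbhds:
  assumes "topological_semigroup X m" "x \<in> topspace X" "y \<in> topspace X"
    and "openin X W" "m x y \<in> W"
  obtains U V where "openin X U" "openin X V" "x \<in> U" "y \<in> V"
    "\<And>u v. u \<in> U \<Longrightarrow> v \<in> V \<Longrightarrow> m u v \<in> W"
proof -
  define P where "P = {p \<in> topspace (prod_topology X X). (\<lambda>(u, v). m u v) p \<in> W}"
  have "openin (prod_topology X X) P"
    unfolding P_def
    by (rule openin_continuous_map_preimage[OF topological_semigroup_continuous_mult[OF assms(1)] assms(4)])
  moreover have "(x, y) \<in> P"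
    using assms(2,3,5) unfolding P_def by simp
  ultimately have "\<exists>U V. openin X U \<and> openin X V \<and> x \<in> U \<and> y \<in> V \<and> U \<times> V \<subseteq> P"
    unfolding openin_prod_topology_alt by simp
  then obtain U V where UV: "openin X U" "openin X V" "x \<in> U" "y \<in> V" "U \<times> V \<subseteq> P"
    by blast
  have "m u v \<in> W" if "u \<in> U" "v \<in> V" for u v
    using UV(5) that unfolding P_def by auto
  then show ?thesis
    by (rule that[OF UV(1-4)])
qed

lemma topological_semigroup_flip:
  assumes "topological_semigroup X m"
  shows "topological_semigroup X (\<lambda>x y. m y x)"
proof -
  have "continuous_map (prod_topology X X) X ((\<lambda>(x, y). m x y) \<circ> (\<lambda>p. (snd p, fst p)))"
    using continuous_map_pairedI[OF continuous_map_snd continuous_map_fst]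
      topological_semigroup_continuous_mult[OF assms] by (rule continuous_map_compose)
  then show ?thesis
    using assms unfolding topological_semigroup_def by (simp add: o_def case_prod_unfold)
qed

lemma B_mult_in_B_carrier: "x \<in> B_carrier L \<Longrightarrow> y \<in> B_carrier L \<Longrightarrow> B_mult x y \<in> B_carrier L"
  by (cases x; cases y) (auto simp: B_carrier_def)

lemma B_mult_sandwich:
  "B_mult (B_mult (Some (a, a)) y) (Some (b, b)) = (if y = Some (a, b) then y else None)"
  by (cases y) (auto split: if_splits)

lemma B_mult_swap:
  "B_mult (map_option prod.swap x) (map_option prod.swap y) = map_option prod.swap (B_mult y x)"
  by (cases x; cases y) auto

lemma B_carrier_swap: "map_option prod.swap ` B_carrier L = B_carrier L"
  unfolding B_carrier_def by (force simp: image_image)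

locale dense_matrix_units =
  fixes L :: "'l set" and X :: "'a topology" and m :: "'a \<Rightarrow> 'a \<Rightarrow> 'a"
    and h :: "('l \<times> 'l) option \<Rightarrow> 'a"
  assumes t1: "t1_space X"
    and semigroup: "topological_semigroup X m"
    and d_feebly_compact: "d_feebly_compact X"
    and image: "h ` B_carrier L \<subseteq> topspace X"
    and inj: "inj_on h (B_carrier L)"
    and hom: "\<And>x y. x \<in> B_carrier L \<Longrightarrow> y \<in> B_carrier L \<Longrightarrow> h (B_mult x y) = m (h x) (h y)"
    and dense: "X closure_of (h ` B_carrier L) = topspace X"
begin

definition e :: "'l \<Rightarrow> 'l \<Rightarrow> 'a" where "e a b = h (Some (a, b))"

definition z :: 'a where "z = h None"

lemma Some_in_B_carrier: "a \<in> L \<Longrightarrow> b \<in> L \<Longrightarrow> Some (a, b) \<in> B_carrier L"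
  and None_in_B_carrier: "None \<in> B_carrier L"
  by (auto simp: B_carrier_def)

lemma e_in_topspace: "a \<in> L \<Longrightarrow> b \<in> L \<Longrightarrow> e a b \<in> topspace X"
  using image Some_in_B_carrier unfolding e_def by blast

lemma z_in_topspace: "z \<in> topspace X"
  using image None_in_B_carrier unfolding z_def by blast

lemma e_mult_e:
  assumes "a \<in> L" "b \<in> L" "c \<in> L" "d \<in> L"
  shows "m (e a b) (e c d) = (if b = c then e a d else z)"
  using hom[OF Some_in_B_carrier[of a b] Some_in_B_carrier[of c d]] assms
  unfolding e_def z_def by (simp split: if_splits)

lemma e_neq_z: "a \<in> L \<Longrightarrow> b \<in> L \<Longrightarrow> e a b \<noteq> z"
  using inj_onD[OF inj _ Some_in_B_carrier None_in_B_carrier] unfolding e_def z_def by blast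

lemma e_eq_e_iff:
  "a \<in> L \<Longrightarrow> b \<in> L \<Longrightarrow> c \<in> L \<Longrightarrow> d \<in> L \<Longrightarrow> e a b = e c d \<longleftrightarrow> a = c \<and> b = d"
  using inj_onD[OF inj _ Some_in_B_carrier[of a b] Some_in_B_carrier[of c d]] unfolding e_def by blast

lemma z_mult:
  assumes "s \<in> topspace X"
  shows "m z s = z"
proof -
  have "s \<in> X closure_of (h ` B_carrier L)"
    using assms dense by simp
  then show ?thesis
  proof (rule forall_in_closure_of)
    show "m z x = z" if "x \<in> h ` B_carrier L" for x
      using that hom[OF None_in_B_carrier] unfolding z_def by auto
    show "closedin X {x \<in> topspace X. m z x = z}"
      using closedin_continuous_map_preimage[OF
          topological_semigroup_continuous_left[OF semigroup z_in_topspace]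
          closedin_t1_singleton[OF t1 z_in_topspace]]
      by simp
  qed
qed

lemma open_singleton_e:
  assumes "a \<in> L" "b \<in> L"
  shows "openin X {e a b}"
proof -
  define f where "f t = m (m (e a a) t) (e b b)" for t
  have f_h: "f (h y) = (if y = Some (a, b) then h y else z)" if y: "y \<in> B_carrier L" for y
  proof -
    have "f (h y) = h (B_mult (B_mult (Some (a, a)) y) (Some (b, b)))"
      using assms y by (simp add: f_def e_def hom Some_in_B_carrier B_mult_in_B_carrier)
    then show ?thesis
      by (simp add: B_mult_sandwich z_def)
  qed
  have "continuous_map X X f"
    using continuous_map_compose[OF
        topological_semigroup_continuous_left[OF semigroup e_in_topspace[OF assms(1,1)]]
        topological_semigroup_continuous_right[OF semigroup e_in_topspace[OF assms(2,2)]]]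
    unfolding f_def by (simp add: o_def)
  then have O_open: "openin X {t \<in> topspace X. f t \<in> topspace X - {z}}"
    using openin_continuous_map_preimage closedin_t1_singleton[OF t1 z_in_topspace] by blast
  have "{t \<in> topspace X. f t \<in> topspace X - {z}} = {e a b}"
  proof (rule t1_space_open_eq_singleton_if_dense[OF t1 dense O_open])
    show "e a b \<in> {t \<in> topspace X. f t \<in> topspace X - {z}}"
      using f_h[OF Some_in_B_carrier[OF assms]] assms e_in_topspace e_neq_z
      by (simp add: e_def)
    show "{t \<in> topspace X. f t \<in> topspace X - {z}} \<inter> h ` B_carrier L \<subseteq> {e a b}"
      using f_h by (auto simp: e_def split: if_splits)
  qed
  with O_open show ?thesis
    by simp
qed

lemma cofinite_idempotents_in_nbhd_z:
  assumes "openin X U" "z \<in> U"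
  shows "finite {a \<in> L. e a a \<notin> U}"
proof (rule ccontr)
  define E where "E = {a \<in> L. e a a \<notin> U}"
  assume "infinite {a \<in> L. e a a \<notin> U}"
  then have "infinite E"
    unfolding E_def .
  moreover have "inj_on (\<lambda>a. e a a) E"
    by (rule inj_onI) (simp add: E_def e_eq_e_iff)
  moreover have "openin X {e a a}" if "a \<in> E" for a
    using that open_singleton_e by (simp add: E_def)
  ultimately obtain q where q: "q \<in> topspace X"
    and acc: "\<And>V. openin X V \<Longrightarrow> q \<in> V \<Longrightarrow> infinite {a \<in> E. e a a \<in> V}"
    using d_feebly_compact_accumulation[OF t1 d_feebly_compact] by blast
  \<comment> \<open>distinct idempotents \<open>e\<^sub>a\<^sub>a\<close> are orthogonal\<close>
  have "m q q = z"
  proof (rule t1_space_eq_if_in_all_nbhds[OF t1])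
    show "m q q \<in> topspace X" "z \<in> topspace X"
      using q topological_semigroup_mult_in[OF semigroup] z_in_topspace by auto
    fix W assume "openin X W" "m q q \<in> W"
    then obtain V V' where VV': "openin X V" "openin X V'" "q \<in> V" "q \<in> V'"
      "\<And>u v. u \<in> V \<Longrightarrow> v \<in> V' \<Longrightarrow> m u v \<in> W"
      using topological_semigroup_mult_nbhds[OF semigroup q q] by blast
    then have inf: "infinite {a \<in> E. e a a \<in> V \<inter> V'}"
      using acc by blast
    then obtain a where a: "a \<in> {a \<in> E. e a a \<in> V \<inter> V'}"
      using infinite_imp_nonempty by blast
    obtain b where b: "b \<in> {a \<in> E. e a a \<in> V \<inter> V'} - {a}"
      using infinite_imp_nonempty[OF infinite_remove[OF inf]] by blast
    then show "z \<in> W"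
      using a b VV'(5)[of "e a a" "e b b"] by (auto simp: E_def e_mult_e)
  qed
  then have "m q q \<in> U"
    using assms(2) by simp
  then obtain V V' where VV': "openin X V" "openin X V'" "q \<in> V" "q \<in> V'"
    "\<And>u v. u \<in> V \<Longrightarrow> v \<in> V' \<Longrightarrow> m u v \<in> U"
    using topological_semigroup_mult_nbhds[OF semigroup q q assms(1)] by blast
  then obtain a where "a \<in> E" "e a a \<in> V \<inter> V'"
    using acc[of "V \<inter> V'"] infinite_imp_nonempty by blast
  then show False
    using VV'(5)[of "e a a" "e a a"] by (simp add: E_def e_mult_e)
qed


lemma infinite_column_in_nbhd_z:
  assumes "openin X U" "z \<in> U" "A \<subseteq> L" "infinite A" "c \<in> L"
  shows "infinite {a \<in> A. e a c \<in> U}"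
proof -
  have "inj_on (\<lambda>a. e a c) A"
    by (rule inj_onI) (metis assms(3,5) e_eq_e_iff subsetD)
  moreover have "openin X {e a c}" if "a \<in> A" for a
    using that assms(3,5) open_singleton_e by blast
  ultimately obtain s where s: "s \<in> topspace X"
    and acc: "\<And>W. openin X W \<Longrightarrow> s \<in> W \<Longrightarrow> infinite {a \<in> A. e a c \<in> W}"
    using d_feebly_compact_accumulation[OF t1 d_feebly_compact _ assms(4)] by blast
  have "m z s \<in> U"
    using z_mult[OF s] assms(2) by simp
  then obtain V W where VW: "openin X V" "openin X W" "z \<in> V" "s \<in> W"
    "\<And>u v. u \<in> V \<Longrightarrow> v \<in> W \<Longrightarrow> m u v \<in> U"
    using topological_semigroup_mult_nbhds[OF semigroup z_in_topspace s assms(1)] by blast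
  have "e a c \<in> U" if "a \<in> A" "e a c \<in> W" "e a a \<in> V" for a
  proof -
    have "m (e a a) (e a c) = e a c"
      using that(1) assms(3,5) by (auto simp: e_mult_e)
    then show ?thesis
      using VW(5) that(2,3) by metis
  qed
  then have "{a \<in> A. e a c \<in> W} - {a \<in> L. e a a \<notin> V} \<subseteq> {a \<in> A. e a c \<in> U}"
    using assms(3) by blast
  moreover have "infinite ({a \<in> A. e a c \<in> W} - {a \<in> L. e a a \<notin> V})"
    using Diff_infinite_finite[OF cofinite_idempotents_in_nbhd_z[OF VW(1,3)] acc[OF VW(2,4)]] .
  ultimately show ?thesis
    using finite_subset by blast
qed

lemma infinite_row_in_nbhd_z:
  assumes "openin X U" "z \<in> U" "A \<subseteq> L" "infinite A" "c \<in> L"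
  shows "infinite {a \<in> A. e c a \<in> U}"
proof -
  \<comment> \<open>transposition is an anti-automorphism of \<open>B\<^sub>\<lambda>\<close>\<close>
  interpret transposed: dense_matrix_units L X "\<lambda>x y. m y x" "h \<circ> map_option prod.swap"
  proof
    show "topological_semigroup X (\<lambda>x y. m y x)"
      by (rule topological_semigroup_flip[OF semigroup])
    have "(h \<circ> map_option prod.swap) ` B_carrier L = h ` B_carrier L"
      by (simp only: image_comp[symmetric] B_carrier_swap)
    then show "(h \<circ> map_option prod.swap) ` B_carrier L \<subseteq> topspace X"
      "X closure_of ((h \<circ> map_option prod.swap) ` B_carrier L) = topspace X"
      using image dense by simp_all
    have "inj_on (map_option prod.swap) (B_carrier L)"
      using option.inj_map[OF inj_swap] by (rule inj_on_subset) simp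
    then show "inj_on (h \<circ> map_option prod.swap) (B_carrier L)"
      using inj by (simp add: comp_inj_on B_carrier_swap)
    show "(h \<circ> map_option prod.swap) (B_mult x y) =
        m ((h \<circ> map_option prod.swap) y) ((h \<circ> map_option prod.swap) x)"
      if "x \<in> B_carrier L" "y \<in> B_carrier L" for x y
    proof -
      have "map_option prod.swap x \<in> B_carrier L" "map_option prod.swap y \<in> B_carrier L"
        using that B_carrier_swap by blast+
      then show ?thesis
        using hom by (simp add: B_mult_swap[of y x, symmetric])
    qed
  qed (use t1 d_feebly_compact in auto)
  have "transposed.e a b = e b a" for a b
    by (simp add: transposed.e_def e_def)
  moreover have "transposed.z = z"
    by (simp add: transposed.z_def z_def)
  ultimately show ?thesis
    using transposed.infinite_column_in_nbhd_z[OF assms(1) _ assms(3-5)] assms(2) by simp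
qed

lemma finite_index: "finite L"
proof (rule ccontr)
  assume "infinite L"
  then obtain c where c: "c \<in> L"
    using infinite_imp_nonempty by blast
  define N where "N = topspace X - {e c c}"
  have "openin X N"
    unfolding N_def using closedin_t1_singleton[OF t1 e_in_topspace[OF c c]] by blast
  moreover have "m z z \<in> N"
    unfolding N_def using z_mult[OF z_in_topspace] z_in_topspace e_neq_z[OF c c] by auto
  ultimately obtain U1 U2 where U: "openin X U1" "openin X U2" "z \<in> U1" "z \<in> U2"
    "\<And>u v. u \<in> U1 \<Longrightarrow> v \<in> U2 \<Longrightarrow> m u v \<in> N"
    using topological_semigroup_mult_nbhds[OF semigroup z_in_topspace z_in_topspace] by blast
  have "infinite {a \<in> L. e a c \<in> U2}"
    using infinite_column_in_nbhd_z[OF U(2,4) order_refl \<open>infinite L\<close> c] .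
  then have "infinite {a \<in> {a \<in> L. e a c \<in> U2}. e c a \<in> U1}"
    by (intro infinite_row_in_nbhd_z[OF U(1,3) _ _ c]) auto
  then obtain a where "a \<in> L" "e a c \<in> U2" "e c a \<in> U1"
    using infinite_imp_nonempty by blast
  then show False
    using U(5)[of "e c a" "e a c"] c by (simp add: N_def e_mult_e)
qed

end

theorem corollary12:
  fixes L :: "'l set" and X :: "'a topology" and m :: "'a \<Rightarrow> 'a \<Rightarrow> 'a"
  assumes "infinite L"
    and "Hausdorff_space X"
    and "topological_semigroup X m"
    and "d_feebly_compact X"
  shows "\<not> (\<exists>h. h ` B_carrier L \<subseteq> topspace X \<and> inj_on h (B_carrier L) \<and>
               (\<forall>x\<in>B_carrier L. \<forall>y\<in>B_carrier L. h (B_mult x y) = m (h x) (h y)) \<and>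
               X closure_of (h ` B_carrier L) = topspace X)"
proof
  assume "\<exists>h. h ` B_carrier L \<subseteq> topspace X \<and> inj_on h (B_carrier L) \<and>
               (\<forall>x\<in>B_carrier L. \<forall>y\<in>B_carrier L. h (B_mult x y) = m (h x) (h y)) \<and>
               X closure_of (h ` B_carrier L) = topspace X"
  then obtain h where "h ` B_carrier L \<subseteq> topspace X" "inj_on h (B_carrier L)"
    "\<forall>x\<in>B_carrier L. \<forall>y\<in>B_carrier L. h (B_mult x y) = m (h x) (h y)"
    "X closure_of (h ` B_carrier L) = topspace X"
    by blast
  with assms(2-4) have "dense_matrix_units L X m h"
    by (simp add: dense_matrix_units_def Hausdorff_imp_t1_space)
  then show False
    using dense_matrix_units.finite_index assms(1) by blast
qed

end
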